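(* Let $\|\cdot\|$ be a strictly convex norm on $\mathbb{R}^n$ that is continuously differentiable on $\mathbb{R}^n\setminus\{0\}$, with gradient $N(x)$ at $x\ne0$, and set $h(x,y)=\|y\|-\langle y,N(x)\rangle$ for $x\ne0$. (1) Suppose there are constants $T,r>0$ such that $h(x,x+2y)\le T h(x,x+y)$ whenever $x\ne0$, $\|y\|\le r\|x\|$ and $\langle y,N(x)\rangle=0$. Then there is a constant $T'$ such that $h(x,x+2y)\le T' h(x,x+y)$ for all $x\neq 0$ and all $y$ with $\langle y,N(x)\rangle=0$. (2) Suppose there are constants $r,K>0$ such that $h(x,x+y)\le K h(x,x-y)$ whenever $x\ne0$, $\|y\|\le r\|x\|$ and $\langle y,N(x)\rangle=0$. Then there is a constant $K'$ such that $h(x,x+y)\le K' h(x,x-y)$ for all $x\ne0$ and all $y$ with $\langle y,N(x)\rangle=0$.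
   Context: $\langle\cdot,\cdot\rangle$ is the Euclidean inner product. Strict convexity of the norm means: if $x,y\neq0$ and $\|x+y\|=\|x\|+\|y\|$, then $y=\alpha x$ for some $\alpha>0$. The hypothesis of (1) is called "doubling in the tangent plane", that of (2) "balanced in the tangent plane". *)

theory Defs
  imports "HOL-Analysis.Analysis"
begin

definition is_norm :: "('a::real_vector \<Rightarrow> real) \<Rightarrow> bool" where
  "is_norm f \<longleftrightarrow> (\<forall>x. f x \<ge> 0) \<and> (\<forall>x. f x = 0 \<longleftrightarrow> x = 0)
     \<and> (\<forall>c x. f (c *\<^sub>R x) = \<bar>c\<bar> * f x) \<and> (\<forall>x y. f (x + y) \<le> f x + f y)"

definition strictly_convex_norm :: "('a::real_vector \<Rightarrow> real) \<Rightarrow> bool" where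
  "strictly_convex_norm f \<longleftrightarrow> is_norm f \<and>
     (\<forall>x y. x \<noteq> 0 \<longrightarrow> y \<noteq> 0 \<longrightarrow> f (x + y) = f x + f y \<longrightarrow> (\<exists>\<alpha>>0. y = \<alpha> *\<^sub>R x))"

definition hfun :: "('a::real_inner \<Rightarrow> real) \<Rightarrow> ('a \<Rightarrow> 'a) \<Rightarrow> 'a \<Rightarrow> 'a \<Rightarrow> real" where
  "hfun nrm N x y = nrm y - inner y (N x)"

end

theory Submission
  imports Defs
begin

text \<open>For a tangent vector \<open>y\<close> (i.e. \<open>\<langle>y, N(x)\<rangle> = 0\<close>) one has
  \<open>h(x, x + y) = \<parallel>x + y\<parallel> - \<parallel>x\<parallel> \<ge> 0\<close>, and \<open>x\<close> minimises the norm on the line \<open>x + \<real>y\<close>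
  (Birkhoff orthogonality). By strict convexity the gap \<open>\<parallel>x + y\<parallel> - \<parallel>x\<parallel>\<close> is positive when
  \<open>\<parallel>y\<parallel> = r\<parallel>x\<parallel>\<close>; by homogeneity and compactness of pairs of unit vectors it is then at least
  \<open>m\<parallel>x\<parallel>\<close>, and by convexity along the segment it is at least \<open>c\<parallel>y\<parallel>\<close> whenever
  \<open>\<parallel>y\<parallel> \<ge> r\<parallel>x\<parallel>\<close>. Since \<open>h(x, x + 2y) \<le> 2\<parallel>y\<parallel>\<close> and \<open>h(x, x + y) \<le> \<parallel>y\<parallel>\<close>,
  outside the ball \<open>\<parallel>y\<parallel> \<le> r\<parallel>x\<parallel>\<close> both inequalities hold with constants \<open>2/c\<close> and \<open>1/c\<close>.\<close>

lemma is_normD: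
  assumes "is_norm nrm"
  shows is_norm_nonneg: "nrm x \<ge> 0"
    and is_norm_eq_0_iff: "nrm x = 0 \<longleftrightarrow> x = 0"
    and is_norm_scaleR: "nrm (c *\<^sub>R x) = \<bar>c\<bar> * nrm x"
    and is_norm_triangle: "nrm (x + y) \<le> nrm x + nrm y"
  using assms unfolding is_norm_def by auto

lemma is_norm_pos: "is_norm nrm \<Longrightarrow> x \<noteq> 0 \<Longrightarrow> nrm x > 0"
  by (metis is_norm_eq_0_iff is_norm_nonneg order_le_neq_trans)

lemma is_norm_minus: "is_norm nrm \<Longrightarrow> nrm (- x) = nrm x"
  using is_norm_scaleR[of nrm "-1" x] by simp

lemma is_norm_convex_on: "is_norm nrm \<Longrightarrow> convex_on UNIV nrm"
proof (rule convex_onI)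
  fix t :: real and x y assume n: "is_norm nrm" and t: "0 < t" "t < 1"
  have "nrm ((1 - t) *\<^sub>R x + t *\<^sub>R y) \<le> nrm ((1 - t) *\<^sub>R x) + nrm (t *\<^sub>R y)"
    by (rule is_norm_triangle[OF n])
  with t show "nrm ((1 - t) *\<^sub>R x + t *\<^sub>R y) \<le> (1 - t) * nrm x + t * nrm y"
    by (simp add: is_norm_scaleR[OF n])
qed simp

lemma is_norm_continuous_on:
  fixes nrm :: "'a::euclidean_space \<Rightarrow> real"
  shows "is_norm nrm \<Longrightarrow> continuous_on UNIV nrm"
  by (rule convex_on_continuous[OF open_UNIV is_norm_convex_on])

lemma convex_on_line:
  assumes "convex_on UNIV f"
  shows "convex_on UNIV (\<lambda>t::real. f (x + t *\<^sub>R v))"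
proof (rule convex_onI)
  fix \<mu> a b :: real assume "0 < \<mu>" "\<mu> < 1"
  moreover have "x + ((1 - \<mu>) *\<^sub>R a + \<mu> *\<^sub>R b) *\<^sub>R v
      = (1 - \<mu>) *\<^sub>R (x + a *\<^sub>R v) + \<mu> *\<^sub>R (x + b *\<^sub>R v)"
    by (simp add: algebra_simps)
  ultimately show "f (x + ((1 - \<mu>) *\<^sub>R a + \<mu> *\<^sub>R b) *\<^sub>R v)
      \<le> (1 - \<mu>) * f (x + a *\<^sub>R v) + \<mu> * f (x + b *\<^sub>R v)"
    using convex_onD[OF assms, of \<mu>] by simp
qed simp

lemma convex_on_secant_le:
  assumes "convex_on UNIV f" and "0 \<le> t" "t \<le> 1"
  shows "f (x + t *\<^sub>R y) - f x \<le> t * (f (x + y) - f x)"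
proof -
  have "f (x + t *\<^sub>R y) = f ((1 - t) *\<^sub>R x + t *\<^sub>R (x + y))"
    by (simp add: algebra_simps)
  also have "\<dots> \<le> (1 - t) * f x + t * f (x + y)"
    using convex_onD[OF assms(1)] assms(2,3) by simp
  finally show ?thesis
    by (simp add: algebra_simps)
qed

lemma convex_on_has_derivative_ge:
  assumes "convex_on UNIV f" and "(f has_derivative f') (at x)"
  shows "f x + f' v \<le> f (x + v)"
proof -
  have "((\<lambda>t::real. x + t *\<^sub>R v) has_derivative (\<lambda>t. t *\<^sub>R v)) (at 0)"
    by (auto intro!: derivative_eq_intros)
  from has_derivative_compose[OF this, of f f'] assms(2)
  have "((\<lambda>t. f (x + t *\<^sub>R v)) has_derivative (\<lambda>t. f' (t *\<^sub>R v))) (at 0)"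
    by simp
  moreover have "(\<lambda>t. f' (t *\<^sub>R v)) = (*) (f' v)"
    using has_derivative_linear[OF assms(2)] by (auto simp: linear_scale)
  ultimately have "((\<lambda>t. f (x + t *\<^sub>R v)) has_real_derivative f' v) (at 0)"
    by (simp add: has_field_derivative_def)
  then have "f' v * (1 - 0) \<le> f (x + 1 *\<^sub>R v) - f (x + 0 *\<^sub>R v)"
    by (intro convex_on_imp_above_tangent[OF convex_on_line[OF assms(1)]]) auto
  then show ?thesis by simp
qed

lemma strictly_convex_norm_is_norm: "strictly_convex_norm nrm \<Longrightarrow> is_norm nrm"
  by (simp add: strictly_convex_norm_def)

definition birkhoff_orthogonal :: "('a::real_vector \<Rightarrow> real) \<Rightarrow> 'a \<Rightarrow> 'a \<Rightarrow> bool" where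
  "birkhoff_orthogonal nrm x y \<longleftrightarrow> (\<forall>t. nrm x \<le> nrm (x + t *\<^sub>R y))"

lemma birkhoff_orthogonal_scaleR_right:
  "birkhoff_orthogonal nrm x y \<Longrightarrow> birkhoff_orthogonal nrm x (c *\<^sub>R y)"
  unfolding birkhoff_orthogonal_def by simp

lemma birkhoff_orthogonal_scaleR_left:
  assumes n: "is_norm nrm" and xy: "birkhoff_orthogonal nrm x y"
  shows "birkhoff_orthogonal nrm (c *\<^sub>R x) y"
  unfolding birkhoff_orthogonal_def
proof
  fix t
  show "nrm (c *\<^sub>R x) \<le> nrm (c *\<^sub>R x + t *\<^sub>R y)"
  proof (cases "c = 0")
    case True
    then show ?thesis using is_norm_eq_0_iff[OF n, of 0] is_norm_nonneg[OF n] by simp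
  next
    case False
    then have "c *\<^sub>R x + t *\<^sub>R y = c *\<^sub>R (x + (t / c) *\<^sub>R y)"
      by (simp add: algebra_simps)
    moreover have "nrm x \<le> nrm (x + (t / c) *\<^sub>R y)"
      using xy by (simp add: birkhoff_orthogonal_def)
    ultimately show ?thesis
      by (simp add: is_norm_scaleR[OF n] mult_left_mono)
  qed
qed

lemma closed_birkhoff_orthogonal:
  fixes nrm :: "'a::real_normed_vector \<Rightarrow> real"
  assumes "continuous_on UNIV nrm"
  shows "closed {p. birkhoff_orthogonal nrm (fst p) (snd p)}"
  unfolding birkhoff_orthogonal_def
  by (auto intro!: closed_Collect_all closed_Collect_le continuous_on_compose2[OF assms]
      continuous_intros)

text \<open>If \<open>x + y\<close> had the same norm as \<open>x\<close>, so would the midpoint \<open>x + y/2\<close>,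
  so equality holds in the triangle inequality for \<open>x, x + y\<close>; strict convexity then puts
  \<open>x + y\<close> on the ray through \<open>x\<close>, and the line \<open>x + t y\<close> would pass through 0.\<close>
lemma birkhoff_orthogonal_norm_less:
  assumes sc: "strictly_convex_norm nrm" and x: "x \<noteq> 0" and y: "y \<noteq> 0"
    and xy: "birkhoff_orthogonal nrm x y"
  shows "nrm x < nrm (x + y)"
proof (rule ccontr)
  have n: "is_norm nrm" by (rule strictly_convex_norm_is_norm[OF sc])
  have line: "nrm x \<le> nrm (x + t *\<^sub>R y)" for t
    using xy by (simp add: birkhoff_orthogonal_def)
  assume "\<not> nrm x < nrm (x + y)"
  with line[of 1] have eq: "nrm (x + y) = nrm x" by simp
  have "x + (x + y) = 2 *\<^sub>R (x + (1/2) *\<^sub>R y)"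
    by (simp add: algebra_simps scaleR_2)
  then have "nrm (x + (x + y)) = 2 * nrm (x + (1/2) *\<^sub>R y)"
    by (simp add: is_norm_scaleR[OF n])
  with line[of "1/2"] eq is_norm_triangle[OF n, of x "x + y"]
  have "nrm (x + (x + y)) = nrm x + nrm (x + y)" by linarith
  moreover have "x + y \<noteq> 0"
    using eq x by (simp add: is_norm_eq_0_iff[OF n, symmetric])
  ultimately obtain \<alpha> where "\<alpha> > 0" "x + y = \<alpha> *\<^sub>R x"
    using sc x unfolding strictly_convex_norm_def by blast
  then have y_eq: "y = (\<alpha> - 1) *\<^sub>R x" by (simp add: algebra_simps)
  with y have "\<alpha> \<noteq> 1" by auto
  with y_eq have "x + (- 1 / (\<alpha> - 1)) *\<^sub>R y = 0" by simp
  with line[of "- 1 / (\<alpha> - 1)"] have "nrm x \<le> nrm 0" by (simp only:)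
  then have "nrm x \<le> 0" using is_norm_eq_0_iff[OF n, of 0] by simp
  with x show False using is_norm_pos[OF n] by force
qed

lemma birkhoff_orthogonal_gap_on_spheres:
  fixes nrm :: "'a::euclidean_space \<Rightarrow> real"
  assumes sc: "strictly_convex_norm nrm" and r: "r > 0"
  obtains m where "m > 0"
    and "\<And>u w. norm u = 1 \<Longrightarrow> norm w = 1 \<Longrightarrow> birkhoff_orthogonal nrm u w \<Longrightarrow>
           m * nrm u \<le> nrm (u + (r * nrm u / nrm w) *\<^sub>R w) - nrm u"
proof -
  have n: "is_norm nrm" by (rule strictly_convex_norm_is_norm[OF sc])
  note cont = is_norm_continuous_on[OF n]
  define K where "K = (sphere 0 1 \<times> sphere 0 1) \<inter> {p. birkhoff_orthogonal nrm (fst p) (snd p)}"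
  define g where "g p = (nrm (fst p + (r * nrm (fst p) / nrm (snd p)) *\<^sub>R snd p) - nrm (fst p))
      / nrm (fst p)" for p :: "'a \<times> 'a"
  have K_nonzero: "fst p \<noteq> 0" "snd p \<noteq> 0" if "p \<in> K" for p
    using that by (auto simp: K_def)
  have "compact K"
    unfolding K_def by (intro compact_Int_closed compact_Times closed_birkhoff_orthogonal cont) auto
  moreover have "continuous_on K g"
    unfolding g_def using K_nonzero is_norm_eq_0_iff[OF n]
    by (intro continuous_intros continuous_on_compose2[OF cont]) auto
  ultimately have "compact (g ` K)" by (rule compact_continuous_image[rotated])
  have g_pos: "g p > 0" if "p \<in> K" for p
  proof -
    obtain u w where p: "p = (u, w)" by fastforce
    with K_nonzero[OF that] have u: "u \<noteq> 0" and w: "w \<noteq> 0" by auto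
    with is_norm_pos[OF n] r have s: "r * nrm u / nrm w > 0" by simp
    have "birkhoff_orthogonal nrm u ((r * nrm u / nrm w) *\<^sub>R w)"
      using that p by (auto simp: K_def intro: birkhoff_orthogonal_scaleR_right)
    moreover have "(r * nrm u / nrm w) *\<^sub>R w \<noteq> 0"
      by (metis s w scaleR_eq_0_iff order_less_irrefl)
    ultimately have "nrm u < nrm (u + (r * nrm u / nrm w) *\<^sub>R w)"
      using birkhoff_orthogonal_norm_less[OF sc u] by blast
    with is_norm_pos[OF n u] show ?thesis by (simp add: g_def p)
  qed
  obtain m where "m > 0" and m: "\<And>p. p \<in> K \<Longrightarrow> m \<le> g p"
  proof (cases "K = {}")
    case False
    with compact_attains_inf[OF \<open>compact (g ` K)\<close>] obtain p0 where "p0 \<in> K" "\<forall>p\<in>K. g p0 \<le> g p"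
      by auto
    with g_pos that show ?thesis by blast
  qed (use that[of 1] in auto)
  show ?thesis
  proof (rule that[OF \<open>m > 0\<close>])
    fix u w assume "norm u = 1" "norm w = 1" "birkhoff_orthogonal nrm u w"
    then have "m \<le> g (u, w)" by (intro m) (auto simp: K_def)
    moreover have "nrm u > 0" using is_norm_pos[OF n, of u] \<open>norm u = 1\<close> by force
    ultimately show "m * nrm u \<le> nrm (u + (r * nrm u / nrm w) *\<^sub>R w) - nrm u"
      by (simp add: g_def pos_le_divide_eq)
  qed
qed

lemma birkhoff_orthogonal_gap_at_ratio:
  fixes nrm :: "'a::euclidean_space \<Rightarrow> real"
  assumes sc: "strictly_convex_norm nrm" and r: "r > 0"
  obtains m where "m > 0"
    and "\<And>x y. x \<noteq> 0 \<Longrightarrow> birkhoff_orthogonal nrm x y \<Longrightarrow> nrm y = r * nrm x \<Longrightarrow>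
           m * nrm x \<le> nrm (x + y) - nrm x"
proof -
  have n: "is_norm nrm" by (rule strictly_convex_norm_is_norm[OF sc])
  obtain m where "m > 0" and m: "\<And>u w. norm u = 1 \<Longrightarrow> norm w = 1 \<Longrightarrow> birkhoff_orthogonal nrm u w \<Longrightarrow>
      m * nrm u \<le> nrm (u + (r * nrm u / nrm w) *\<^sub>R w) - nrm u"
    using birkhoff_orthogonal_gap_on_spheres[OF sc r] by blast
  show ?thesis
  proof (rule that[OF \<open>m > 0\<close>])
    fix x y assume x: "x \<noteq> 0" and xy: "birkhoff_orthogonal nrm x y" and ratio: "nrm y = r * nrm x"
    have "nrm x > 0" by (rule is_norm_pos[OF n x])
    with ratio r have "nrm y > 0" by simp
    then have y: "y \<noteq> 0" using is_norm_eq_0_iff[OF n, of 0] by auto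
    define u where "u = (1 / norm x) *\<^sub>R x"
    define w where "w = (1 / norm y) *\<^sub>R y"
    have "birkhoff_orthogonal nrm u w"
      unfolding u_def w_def
      by (intro birkhoff_orthogonal_scaleR_left[OF n] birkhoff_orthogonal_scaleR_right xy)
    define s where "s = r * nrm u / nrm w"
    from x y have "m * nrm u \<le> nrm (u + s *\<^sub>R w) - nrm u"
      unfolding s_def by (intro m \<open>birkhoff_orthogonal nrm u w\<close>) (simp_all add: u_def w_def)
    then have "norm x * (m * nrm u) \<le> norm x * (nrm (u + s *\<^sub>R w) - nrm u)"
      by (simp add: mult_left_mono)
    moreover have "nrm u = nrm x / norm x" "nrm w = nrm y / norm y"
      by (simp_all add: u_def w_def is_norm_scaleR[OF n])
    with x y r ratio \<open>nrm x > 0\<close> have "x + y = norm x *\<^sub>R (u + s *\<^sub>R w)"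
      by (simp add: u_def w_def s_def algebra_simps)
    then have "nrm (x + y) = norm x * nrm (u + s *\<^sub>R w)"
      by (simp add: is_norm_scaleR[OF n])
    moreover have "nrm x = norm x * nrm u"
      using x by (simp add: u_def is_norm_scaleR[OF n])
    ultimately show "m * nrm x \<le> nrm (x + y) - nrm x"
      by (simp add: algebra_simps)
  qed
qed

text \<open>Convexity along the segment from \<open>x\<close> to \<open>x + y\<close> reduces the general case to the ratio
  \<open>\<parallel>y\<parallel> = r \<parallel>x\<parallel>\<close>.\<close>
lemma birkhoff_orthogonal_gap:
  fixes nrm :: "'a::euclidean_space \<Rightarrow> real"
  assumes sc: "strictly_convex_norm nrm" and r: "r > 0"
  obtains c where "c > 0"
    and "\<And>x y. x \<noteq> 0 \<Longrightarrow> birkhoff_orthogonal nrm x y \<Longrightarrow> r * nrm x \<le> nrm y \<Longrightarrow>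
           c * nrm y \<le> nrm (x + y) - nrm x"
proof -
  have n: "is_norm nrm" by (rule strictly_convex_norm_is_norm[OF sc])
  obtain m where "m > 0" and m: "\<And>x y. x \<noteq> 0 \<Longrightarrow> birkhoff_orthogonal nrm x y \<Longrightarrow>
      nrm y = r * nrm x \<Longrightarrow> m * nrm x \<le> nrm (x + y) - nrm x"
    using birkhoff_orthogonal_gap_at_ratio[OF sc r] by blast
  show ?thesis
  proof (rule that[of "m / r"])
    show "m / r > 0" using \<open>m > 0\<close> r by simp
    fix x y assume x: "x \<noteq> 0" and xy: "birkhoff_orthogonal nrm x y" and far: "r * nrm x \<le> nrm y"
    define t where "t = r * nrm x / nrm y"
    have "nrm x > 0" by (rule is_norm_pos[OF n x])
    with far r have "nrm y > 0" by (smt (verit) mult_pos_pos)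
    with far r \<open>nrm x > 0\<close> have t: "0 < t" "t \<le> 1" by (simp_all add: t_def field_simps)
    have "m * nrm x \<le> nrm (x + t *\<^sub>R y) - nrm x"
      using \<open>nrm y > 0\<close> t by (intro m x birkhoff_orthogonal_scaleR_right xy)
        (use r \<open>nrm x > 0\<close> in \<open>simp add: t_def is_norm_scaleR[OF n]\<close>)
    also have "\<dots> \<le> t * (nrm (x + y) - nrm x)"
      using t by (intro convex_on_secant_le is_norm_convex_on n) auto
    finally have "m * nrm x / t \<le> nrm (x + y) - nrm x"
      using t by (simp add: divide_le_eq mult.commute)
    then show "m / r * nrm y \<le> nrm (x + y) - nrm x"
      using r \<open>nrm x > 0\<close> by (simp add: t_def)
  qed
qed

locale differentiable_strictly_convex_norm =
  fixes nrm :: "'a::euclidean_space \<Rightarrow> real" and N :: "'a \<Rightarrow> 'a"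
  assumes strictly_convex: "strictly_convex_norm nrm"
    and has_derivative_nrm: "x \<noteq> 0 \<Longrightarrow> (nrm has_derivative (\<lambda>v. inner v (N x))) (at x)"
begin

lemma is_norm: "is_norm nrm"
  by (rule strictly_convex_norm_is_norm[OF strictly_convex])

lemma nrm_add_ge: "x \<noteq> 0 \<Longrightarrow> nrm x + inner v (N x) \<le> nrm (x + v)"
  by (rule convex_on_has_derivative_ge[OF is_norm_convex_on[OF is_norm] has_derivative_nrm])

lemma inner_N_self: 
  assumes "x \<noteq> 0" shows "inner x (N x) = nrm x"
proof (rule order.antisym)
  have "nrm x + inner x (N x) \<le> nrm (2 *\<^sub>R x)"
    using nrm_add_ge[OF assms, of x] by (simp add: scaleR_2)
  then show "inner x (N x) \<le> nrm x" by (simp add: is_norm_scaleR[OF is_norm])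
  show "nrm x \<le> inner x (N x)"
    using nrm_add_ge[OF assms, of "- x"] is_norm_eq_0_iff[OF is_norm, of 0] by simp
qed

lemma hfun_tangent:
  "x \<noteq> 0 \<Longrightarrow> inner y (N x) = 0 \<Longrightarrow> hfun nrm N x (x + y) = nrm (x + y) - nrm x"
  by (simp add: hfun_def inner_add_left inner_N_self)

lemma tangent_birkhoff_orthogonal:
  "x \<noteq> 0 \<Longrightarrow> inner y (N x) = 0 \<Longrightarrow> birkhoff_orthogonal nrm x y"
  using nrm_add_ge[of x "_ *\<^sub>R y"] by (simp add: birkhoff_orthogonal_def)

lemma hfun_tangent_nonneg: "x \<noteq> 0 \<Longrightarrow> inner y (N x) = 0 \<Longrightarrow> 0 \<le> hfun nrm N x (x + y)"
  using nrm_add_ge[of x y] by (simp add: hfun_tangent)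

lemma hfun_tangent_le: "x \<noteq> 0 \<Longrightarrow> inner y (N x) = 0 \<Longrightarrow> hfun nrm N x (x + y) \<le> nrm y"
  using is_norm_triangle[OF is_norm, of x y] by (simp add: hfun_tangent)

lemma hfun_tangent_far:
  assumes "r > 0"
  obtains c where "c > 0"
    and "\<And>x y. x \<noteq> 0 \<Longrightarrow> inner y (N x) = 0 \<Longrightarrow> r * nrm x \<le> nrm y \<Longrightarrow>
           c * nrm y \<le> hfun nrm N x (x + y)"
  using birkhoff_orthogonal_gap[OF strictly_convex assms]
  by (metis hfun_tangent tangent_birkhoff_orthogonal)

lemma tangent_bound_globalize:
  assumes "r > 0"
    and near: "\<And>x y. x \<noteq> 0 \<Longrightarrow> inner y (N x) = 0 \<Longrightarrow> nrm y \<le> r * nrm x \<Longrightarrow>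
      F x y \<le> K * hfun nrm N x (x + y)"
    and far: "\<And>x y. x \<noteq> 0 \<Longrightarrow> inner y (N x) = 0 \<Longrightarrow> F x y \<le> C * nrm y"
    and "C \<ge> 0"
  shows "\<exists>K'. \<forall>x y. x \<noteq> 0 \<and> inner y (N x) = 0 \<longrightarrow> F x y \<le> K' * hfun nrm N x (x + y)"
proof -
  obtain c where "c > 0" and gap: "\<And>x y. x \<noteq> 0 \<Longrightarrow> inner y (N x) = 0 \<Longrightarrow> r * nrm x \<le> nrm y \<Longrightarrow>
      c * nrm y \<le> hfun nrm N x (x + y)"
    using hfun_tangent_far[OF \<open>r > 0\<close>] by blast
  have "F x y \<le> max K (C / c) * hfun nrm N x (x + y)"
    if x: "x \<noteq> 0" and y: "inner y (N x) = 0" for x y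
  proof -
    have "F x y \<le> K * hfun nrm N x (x + y) \<or> F x y \<le> C / c * hfun nrm N x (x + y)"
    proof (cases "nrm y \<le> r * nrm x")
      case True
      then show ?thesis using near[OF x y] by blast
    next
      case False
      have "F x y \<le> C * nrm y" by (rule far[OF x y])
      also have "\<dots> \<le> C / c * hfun nrm N x (x + y)"
      proof -
        have "C * (c * nrm y) \<le> C * hfun nrm N x (x + y)"
          using gap[OF x y] False \<open>C \<ge> 0\<close> by (intro mult_left_mono) auto
        with \<open>c > 0\<close> show ?thesis by (simp add: field_simps ac_simps)
      qed
      finally show ?thesis ..
    qed
    with hfun_tangent_nonneg[OF x y] show ?thesis
      by (meson max.cobounded1 max.cobounded2 mult_right_mono order_trans)
  qed
  then show ?thesis by blast
qed

lemma doubling_tangent_global: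
  assumes "r > 0"
    and "\<forall>x y. x \<noteq> 0 \<and> nrm y \<le> r * nrm x \<and> inner y (N x) = 0 \<longrightarrow>
      hfun nrm N x (x + 2 *\<^sub>R y) \<le> T * hfun nrm N x (x + y)"
  shows "\<exists>T'. \<forall>x y. x \<noteq> 0 \<and> inner y (N x) = 0 \<longrightarrow>
      hfun nrm N x (x + 2 *\<^sub>R y) \<le> T' * hfun nrm N x (x + y)"
proof (rule tangent_bound_globalize[OF \<open>r > 0\<close>])
  show "hfun nrm N x (x + 2 *\<^sub>R y) \<le> 2 * nrm y" if "x \<noteq> 0" "inner y (N x) = 0" for x y
    using hfun_tangent_le[of x "2 *\<^sub>R y"] that by (simp add: is_norm_scaleR[OF is_norm])
qed (use assms(2) in auto)

lemma balanced_tangent_global: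
  assumes "r > 0"
    and near: "\<forall>x y. x \<noteq> 0 \<and> nrm y \<le> r * nrm x \<and> inner y (N x) = 0 \<longrightarrow>
      hfun nrm N x (x + y) \<le> K * hfun nrm N x (x - y)"
  shows "\<exists>K'. \<forall>x y. x \<noteq> 0 \<and> inner y (N x) = 0 \<longrightarrow>
      hfun nrm N x (x + y) \<le> K' * hfun nrm N x (x - y)"
proof -
  have "\<exists>K'. \<forall>x y. x \<noteq> 0 \<and> inner y (N x) = 0 \<longrightarrow>
      hfun nrm N x (x - y) \<le> K' * hfun nrm N x (x + y)"
  proof (rule tangent_bound_globalize[OF \<open>r > 0\<close>])
    show "hfun nrm N x (x - y) \<le> K * hfun nrm N x (x + y)"
      if "x \<noteq> 0" "inner y (N x) = 0" "nrm y \<le> r * nrm x" for x y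
      using near[rule_format, of x "- y"] that by (simp add: is_norm_minus[OF is_norm])
    show "hfun nrm N x (x - y) \<le> 1 * nrm y" if "x \<noteq> 0" "inner y (N x) = 0" for x y
      using hfun_tangent_le[of x "- y"] that by (simp add: is_norm_minus[OF is_norm])
  qed simp
  then obtain K' where "\<forall>x y. x \<noteq> 0 \<and> inner y (N x) = 0 \<longrightarrow>
      hfun nrm N x (x - y) \<le> K' * hfun nrm N x (x + y)" ..
  from this[rule_format, of _ "- _"] show ?thesis by auto
qed

end

theorem lemma6p4:
  fixes nrm :: "real ^ 'n \<Rightarrow> real" and N :: "real ^ 'n \<Rightarrow> real ^ 'n"
  assumes sc: "strictly_convex_norm nrm"
    and grad: "\<And>x. x \<noteq> 0 \<Longrightarrow> (nrm has_derivative (\<lambda>v. inner v (N x))) (at x)"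
    and cont: "continuous_on (UNIV - {0}) N"
  shows "((\<exists>T r. T > 0 \<and> r > 0 \<and>
            (\<forall>x y. x \<noteq> 0 \<and> nrm y \<le> r * nrm x \<and> inner y (N x) = 0 \<longrightarrow>
               hfun nrm N x (x + 2 *\<^sub>R y) \<le> T * hfun nrm N x (x + y)))
         \<longrightarrow> (\<exists>T'. \<forall>x y. x \<noteq> 0 \<and> inner y (N x) = 0 \<longrightarrow>
               hfun nrm N x (x + 2 *\<^sub>R y) \<le> T' * hfun nrm N x (x + y)))
     \<and> ((\<exists>r K. r > 0 \<and> K > 0 \<and>
            (\<forall>x y. x \<noteq> 0 \<and> nrm y \<le> r * nrm x \<and> inner y (N x) = 0 \<longrightarrow>
               hfun nrm N x (x + y) \<le> K * hfun nrm N x (x - y)))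
         \<longrightarrow> (\<exists>K'. \<forall>x y. x \<noteq> 0 \<and> inner y (N x) = 0 \<longrightarrow>
               hfun nrm N x (x + y) \<le> K' * hfun nrm N x (x - y)))"
proof -
  interpret differentiable_strictly_convex_norm nrm N
    using sc grad by unfold_locales
  show ?thesis
    using doubling_tangent_global balanced_tangent_global by blast
qed

end
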